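(* Let $L>0$, $d\ge1$, and let $X=\{x^{(1)},\dots,x^{(n)}\}\subset\mathbb{R}^d$ with $\|x^{(i)}\|_\infty\le L$ for all $i$. Let $w\in\mathbb{R}^n$ with $\left(\sum_{i=1}^n|w_i|\right)^2\le\xi$, and let $\alpha>0$. Then for every positive integer $s$, \[ w^T\left(K_X-K^{\mathsf{GS}}_{X,s}\right)w\le\left(\sum_{i=1}^n|w_i|\right)^2 d\,\exp(2dL^2)\left(\frac{2eL^2}{s}\right)^s, \] and moreover this quantity is at most $\alpha$ when $s=\Theta\!\left(\frac{\log\frac{\xi\, d\exp(2dL^2)}{\alpha}}{\log\left(\frac{1}{2eL^2}\log\frac{\xi\, d\exp(2dL^2)}{\alpha}\right)}\right)$ (with a sufficiently large constant).
   Context: $K_X$ is the $n\times n$ matrix with $(K_X)_{i,j}=\exp(-\|x^{(i)}-x^{(j)}\|^2)$ (Euclidean norm). For a positive integer $s$, $K^{\mathsf{GS}}_{X,s}$ is the $n\times n$ matrix with \[ (K^{\mathsf{GS}}_{X,s})_{i,j}=\sum_{j_1=0}^{s-1}\cdots\sum_{j_d=0}^{s-1}\left(e^{-\|x^{(i)}\|^2}\prod_{a=1}^{d}\sqrt{\tfrac{2^{j_a}}{j_a!}}(x^{(i)}_a)^{j_a}\right)\left(e^{-\|x^{(j)}\|^2}\prod_{a=1}^{d}\sqrt{\tfrac{2^{j_a}}{j_a!}}(x^{(j)}_a)^{j_a}\right). \] *)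

theory Defs
  imports Complex_Main "HOL-Library.FuncSet"
begin

text \<open>Points x^(1..n) in R^d are represented as x :: nat => nat => real,
  point i (i < n), coordinate a (a < d), both 0-based.\<close>

definition gauss_kernel :: "nat \<Rightarrow> (nat \<Rightarrow> nat \<Rightarrow> real) \<Rightarrow> nat \<Rightarrow> nat \<Rightarrow> real" where
  "gauss_kernel d x i j = exp (- (\<Sum>a<d. (x i a - x j a)^2))"

definition gs_feature :: "nat \<Rightarrow> (nat \<Rightarrow> nat \<Rightarrow> real) \<Rightarrow> nat \<Rightarrow> (nat \<Rightarrow> nat) \<Rightarrow> real" where
  "gs_feature d x i J =
     exp (- (\<Sum>a<d. (x i a)^2)) * (\<Prod>a<d. sqrt (2 ^ J a / fact (J a)) * (x i a) ^ J a)"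

definition gs_kernel :: "nat \<Rightarrow> nat \<Rightarrow> (nat \<Rightarrow> nat \<Rightarrow> real) \<Rightarrow> nat \<Rightarrow> nat \<Rightarrow> real" where
  "gs_kernel d s x i j =
     (\<Sum>J\<in>PiE {..<d} (\<lambda>_. {..<s}). gs_feature d x i J * gs_feature d x j J)"

definition quad_form :: "nat \<Rightarrow> (nat \<Rightarrow> real) \<Rightarrow> (nat \<Rightarrow> nat \<Rightarrow> real) \<Rightarrow> real" where
  "quad_form n w M = (\<Sum>i<n. \<Sum>j<n. w i * M i j * w j)"

end

theory Submission
  imports Defs
begin

text \<open>Both kernels factor over the coordinates: the Gaussian one into
  \<open>exp (-(y - z)\<^sup>2) = exp (-y\<^sup>2 - z\<^sup>2) * exp (2 y z)\<close>, the GS one into the same factors with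
  \<open>exp (2 y z)\<close> replaced by its Taylor polynomial of degree \<open>s - 1\<close>. All these factors have
  modulus at most 1, so the difference of the products is at most the sum of the coordinatewise
  differences. Each of these is bounded by the Lagrange remainder \<open>(2 L\<^sup>2)\<^sup>s / s!\<close> once the weight
  \<open>exp (-y\<^sup>2 - z\<^sup>2)\<close> has absorbed \<open>exp \<bar>2 y z\<bar>\<close>, and \<open>s! \<ge> (s / e)\<^sup>s\<close> gives the stated bound.
  For the choice of \<open>s\<close>, put \<open>c = 2 e L\<^sup>2\<close> and \<open>u = ln A / c\<close>; then \<open>t = s / c \<ge> 2 u / ln u \<ge> \<surd>u\<close>
  gives \<open>s ln t \<ge> c u = ln A\<close>, i.e. \<open>(c / s)\<^sup>s \<le> 1 / A\<close>.\<close>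

definition gs_kernel_1d :: "nat \<Rightarrow> real \<Rightarrow> real \<Rightarrow> real" where
  "gs_kernel_1d s y z = exp (- y\<^sup>2 - z\<^sup>2) * (\<Sum>k<s. (2 * y * z) ^ k / fact k)"

lemma gauss_kernel_eq_prod:
  "gauss_kernel d x i j = (\<Prod>a<d. exp (- (x i a - x j a)\<^sup>2))"
  unfolding gauss_kernel_def by (simp add: exp_sum sum_negf[symmetric])

lemma gs_feature_mult:
  "gs_feature d x i J * gs_feature d x j J
     = (\<Prod>a<d. exp (- (x i a)\<^sup>2 - (x j a)\<^sup>2) * (2 * x i a * x j a) ^ J a / fact (J a))"
  unfolding gs_feature_def exp_sum[OF finite_lessThan] sum_negf[symmetric]
  by (simp add: prod.distrib[symmetric] exp_diff exp_minus field_simps)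

lemma gs_kernel_eq_prod:
  "gs_kernel d s x i j = (\<Prod>a<d. gs_kernel_1d s (x i a) (x j a))"
  unfolding gs_kernel_def gs_feature_mult gs_kernel_1d_def
  by (simp add: prod_sum_PiE sum_distrib_left)

lemma abs_exp_taylor_le:
  fixes p :: real
  shows "\<bar>\<Sum>k<s. p ^ k / fact k\<bar> \<le> exp \<bar>p\<bar>"
proof -
  obtain t where "exp \<bar>p\<bar> = (\<Sum>k<s. \<bar>p\<bar> ^ k / fact k) + exp t / fact s * \<bar>p\<bar> ^ s"
    using Maclaurin_exp_le by blast
  then have "(\<Sum>k<s. \<bar>p\<bar> ^ k / fact k) \<le> exp \<bar>p\<bar>"
    by simp
  moreover have "\<bar>\<Sum>k<s. p ^ k / fact k\<bar> \<le> (\<Sum>k<s. \<bar>p\<bar> ^ k / fact k)"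
    using sum_abs[of "\<lambda>k. p ^ k / fact k"] by (simp add: power_abs)
  ultimately show ?thesis
    by linarith
qed

lemma abs_exp_minus_taylor_le:
  fixes p :: real
  shows "\<bar>exp p - (\<Sum>k<s. p ^ k / fact k)\<bar> \<le> exp \<bar>p\<bar> * \<bar>p\<bar> ^ s / fact s"
proof -
  obtain t where t: "\<bar>t\<bar> \<le> \<bar>p\<bar>" "exp p = (\<Sum>k<s. p ^ k / fact k) + exp t / fact s * p ^ s"
    using Maclaurin_exp_le by blast
  then have "\<bar>exp p - (\<Sum>k<s. p ^ k / fact k)\<bar> = exp t * \<bar>p\<bar> ^ s / fact s"
    by (simp add: abs_mult power_abs)
  also have "\<dots> \<le> exp \<bar>p\<bar> * \<bar>p\<bar> ^ s / fact s"
    using t by (intro divide_right_mono mult_right_mono) auto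
  finally show ?thesis .
qed

lemma abs_gs_kernel_1d_le_1: "\<bar>gs_kernel_1d s y z\<bar> \<le> 1"
proof -
  have "\<bar>gs_kernel_1d s y z\<bar> \<le> exp (- y\<^sup>2 - z\<^sup>2) * exp \<bar>2 * y * z\<bar>"
    using abs_exp_taylor_le[of "2 * y * z" s] by (simp add: gs_kernel_1d_def abs_mult)
  also have "\<dots> = exp (- (\<bar>y\<bar> - \<bar>z\<bar>)\<^sup>2)"
    by (simp add: exp_add[symmetric] abs_mult power2_eq_square algebra_simps)
  also have "\<dots> \<le> 1"
    by simp
  finally show ?thesis .
qed

lemma abs_gauss_minus_gs_kernel_1d_le:
  "\<bar>exp (- (y - z)\<^sup>2) - gs_kernel_1d s y z\<bar> \<le> \<bar>2 * y * z\<bar> ^ s / fact s"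
proof -
  have "exp (- (y - z)\<^sup>2) = exp (- y\<^sup>2 - z\<^sup>2) * exp (2 * y * z)"
    by (simp add: exp_add[symmetric] power2_diff)
  then have "\<bar>exp (- (y - z)\<^sup>2) - gs_kernel_1d s y z\<bar>
      = exp (- y\<^sup>2 - z\<^sup>2) * \<bar>exp (2 * y * z) - (\<Sum>k<s. (2 * y * z) ^ k / fact k)\<bar>"
    unfolding gs_kernel_1d_def by (simp add: abs_mult flip: right_diff_distrib)
  also have "\<dots> \<le> exp (- y\<^sup>2 - z\<^sup>2) * (exp \<bar>2 * y * z\<bar> * \<bar>2 * y * z\<bar> ^ s / fact s)"
    by (intro mult_left_mono abs_exp_minus_taylor_le) auto
  also have "\<dots> = exp (- (\<bar>y\<bar> - \<bar>z\<bar>)\<^sup>2) * (\<bar>2 * y * z\<bar> ^ s / fact s)"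
    by (simp add: exp_add[symmetric] abs_mult power2_eq_square algebra_simps)
  also have "\<dots> \<le> \<bar>2 * y * z\<bar> ^ s / fact s"
    by (intro mult_left_le_one_le) auto
  finally show ?thesis .
qed

lemma power_self_div_fact_le_exp: "real s ^ s / fact s \<le> exp (real s)"
proof -
  obtain t where "exp (real s) = (\<Sum>k<Suc s. real s ^ k / fact k) + exp t / fact (Suc s) * real s ^ Suc s"
    using Maclaurin_exp_le by blast
  moreover have "real s ^ s / fact s \<le> (\<Sum>k<Suc s. real s ^ k / fact k)"
    by (rule member_le_sum) auto
  ultimately show ?thesis
    by simp
qed

lemma power_div_fact_le:
  fixes c :: real
  assumes "c \<ge> 0"
  shows "c ^ s / fact s \<le> (exp 1 * c / s) ^ s"
proof (cases "s = 0")
  case False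
  then have "c ^ s / fact s = (c / s) ^ s * (real s ^ s / fact s)"
    by (simp add: power_divide)
  also have "\<dots> \<le> (c / s) ^ s * exp (real s)"
    using assms by (intro mult_left_mono power_self_div_fact_le_exp) simp
  also have "exp (real s) = exp 1 ^ s"
    using exp_of_nat_mult[of s 1] by simp
  also have "(c / s) ^ s * exp 1 ^ s = (exp 1 * c / s) ^ s"
    by (simp add: power_mult_distrib power_divide)
  finally show ?thesis .
qed simp

lemma abs_gauss_kernel_minus_gs_kernel_le:
  assumes "\<forall>a<d. \<bar>x i a\<bar> \<le> L" and "\<forall>a<d. \<bar>x j a\<bar> \<le> L"
  shows "\<bar>gauss_kernel d x i j - gs_kernel d s x i j\<bar> \<le> d * ((2 * L\<^sup>2) ^ s / fact s)"
proof -
  have "\<bar>gauss_kernel d x i j - gs_kernel d s x i j\<bar>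
      \<le> (\<Sum>a<d. \<bar>exp (- (x i a - x j a)\<^sup>2) - gs_kernel_1d s (x i a) (x j a)\<bar>)"
    unfolding gauss_kernel_eq_prod gs_kernel_eq_prod
    using norm_prod_diff[of "{..<d}" "\<lambda>a. exp (- (x i a - x j a)\<^sup>2)"
        "\<lambda>a. gs_kernel_1d s (x i a) (x j a)"]
    by (simp add: abs_gs_kernel_1d_le_1)
  also have "\<dots> \<le> (\<Sum>a<d. (2 * L\<^sup>2) ^ s / fact s)"
  proof (rule sum_mono)
    fix a assume "a \<in> {..<d}"
    then have "\<bar>x i a\<bar> * \<bar>x j a\<bar> \<le> L * L"
      using assms by (intro mult_mono) (auto intro: order_trans[OF abs_ge_zero])
    then have "\<bar>2 * x i a * x j a\<bar> \<le> 2 * L\<^sup>2"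
      by (simp add: abs_mult power2_eq_square)
    then have "\<bar>2 * x i a * x j a\<bar> ^ s / fact s \<le> (2 * L\<^sup>2) ^ s / fact s"
      by (intro divide_right_mono power_mono) auto
    then show "\<bar>exp (- (x i a - x j a)\<^sup>2) - gs_kernel_1d s (x i a) (x j a)\<bar> \<le> (2 * L\<^sup>2) ^ s / fact s"
      using abs_gauss_minus_gs_kernel_1d_le by (rule order_trans[rotated])
  qed
  finally show ?thesis
    by simp
qed

lemma quad_form_le:
  assumes "\<forall>i<n. \<forall>j<n. \<bar>M i j\<bar> \<le> B"
  shows "quad_form n w M \<le> (\<Sum>i<n. \<bar>w i\<bar>)\<^sup>2 * B"
proof -
  have "quad_form n w M \<le> (\<Sum>i<n. \<Sum>j<n. \<bar>w i\<bar> * B * \<bar>w j\<bar>)"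
    unfolding quad_form_def
  proof (intro sum_mono)
    fix i j assume "i \<in> {..<n}" "j \<in> {..<n}"
    then have "\<bar>w i * M i j * w j\<bar> \<le> \<bar>w i\<bar> * B * \<bar>w j\<bar>"
      using assms by (simp add: abs_mult mult_mono mult_right_mono)
    then show "w i * M i j * w j \<le> \<bar>w i\<bar> * B * \<bar>w j\<bar>"
      by linarith
  qed
  also have "\<dots> = (\<Sum>i<n. \<bar>w i\<bar>)\<^sup>2 * B"
    by (simp add: power2_eq_square sum_distrib_left sum_distrib_right algebra_simps)
  finally show ?thesis .
qed

lemma quad_form_gauss_minus_gs_le:
  assumes "\<forall>i<n. \<forall>a<d. \<bar>x i a\<bar> \<le> L"
  shows "quad_form n w (\<lambda>i j. gauss_kernel d x i j - gs_kernel d s x i j)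
           \<le> (\<Sum>i<n. \<bar>w i\<bar>)\<^sup>2 * (d * (2 * exp 1 * L\<^sup>2 / s) ^ s)"
proof (rule quad_form_le, intro allI impI)
  fix i j assume "i < n" "j < n"
  then have "\<bar>gauss_kernel d x i j - gs_kernel d s x i j\<bar> \<le> d * ((2 * L\<^sup>2) ^ s / fact s)"
    using assms by (intro abs_gauss_kernel_minus_gs_kernel_le) auto
  also have "\<dots> \<le> d * (2 * exp 1 * L\<^sup>2 / s) ^ s"
    using power_div_fact_le[of "2 * L\<^sup>2" s] by (intro mult_left_mono) (simp_all add: ac_simps)
  finally show "\<bar>gauss_kernel d x i j - gs_kernel d s x i j\<bar> \<le> d * (2 * exp 1 * L\<^sup>2 / s) ^ s" .
qed

lemma ln_le_two_sqrt:
  fixes u :: real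
  assumes "u > 0"
  shows "ln u \<le> 2 * sqrt u"
proof -
  have "ln u / 2 \<le> sqrt u - 1"
    using assms ln_le_minus_one[of "sqrt u"] by (simp add: ln_sqrt)
  then show ?thesis
    by simp
qed

lemma power_div_le_exp_neg:
  fixes c l :: real
  assumes c: "c > 0" and l_gt: "l / c > 1" and s: "real s \<ge> 2 * (l / ln (l / c))"
  shows "(c / s) ^ s \<le> exp (- l)"
proof -
  define u where "u = l / c"
  define t where "t = real s / c"
  have u: "u > 1" "l = c * u"
    using l_gt c by (simp_all add: u_def)
  have "0 < 2 * u / ln u"
    using u by simp
  also have t: "2 * u / ln u \<le> t"
    using s c u by (simp add: t_def pos_le_divide_eq algebra_simps)
  finally have t_pos: "t > 0" .
  then have "s > 0"
    using c by (simp add: t_def zero_less_divide_iff)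
  have "sqrt u * ln u \<le> sqrt u * (2 * sqrt u)"
    using ln_le_two_sqrt[of u] u by (intro mult_left_mono) auto
  also have "\<dots> = 2 * u"
    using u by simp
  finally have "sqrt u \<le> t"
    using u t by (metis less_trans zero_less_one ln_gt_zero pos_le_divide_eq order_trans)
  then have "ln u / 2 \<le> ln t"
    using u by (metis ln_le_cancel_iff ln_sqrt less_le_trans real_sqrt_gt_zero zero_less_one less_imp_le)
  then have "2 * u / ln u * (ln u / 2) \<le> t * ln t"
    using t t_pos u by (intro mult_mono) auto
  then have "c * u \<le> c * (t * ln t)"
    using u c by simp
  also have "\<dots> = real s * ln t"
    using c by (simp add: t_def)
  finally have "l \<le> real s * ln t"
    using u by simp
  moreover have "(c / s) ^ s = exp (- (real s * ln t))"
  proof -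
    have "(c / s) ^ s = exp (real s * ln (c / s))"
      using c \<open>s > 0\<close> by (simp add: exp_of_nat_mult)
    also have "ln (c / s) = - ln t"
      using c \<open>s > 0\<close> by (simp add: t_def ln_div)
    finally show ?thesis
      by simp
  qed
  ultimately show ?thesis
    by simp
qed

lemma scaled_power_div_le:
  fixes S B c \<xi> \<alpha> :: real
  assumes "0 \<le> S" "S \<le> \<xi>" "B > 0" "\<alpha> > 0" "c > 0"
    and ln_gt: "ln (\<xi> * B / \<alpha>) / c > 1"
    and s: "real s \<ge> 2 * (ln (\<xi> * B / \<alpha>) / ln (ln (\<xi> * B / \<alpha>) / c))"
  shows "S * B * (c / s) ^ s \<le> \<alpha>"
proof -
  have "(c / s) ^ s \<le> exp (- ln (\<xi> * B / \<alpha>))"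
    using assms by (intro power_div_le_exp_neg) auto
  also have "\<dots> = \<alpha> / (\<xi> * B)"
  proof -
    have "\<xi> \<noteq> 0"
      using ln_gt by auto
    then show ?thesis
      using assms by (simp add: exp_minus)
  qed
  finally have "S * B * (c / s) ^ s \<le> \<xi> * B * (\<alpha> / (\<xi> * B))"
    using assms by (intro mult_mono) auto
  also have "\<dots> \<le> \<alpha>"
    using assms by simp
  finally show ?thesis .
qed

theorem lemma2p6:
  "\<exists>C>0. \<forall>(L::real) (d::nat) (n::nat) (x::nat \<Rightarrow> nat \<Rightarrow> real) (w::nat \<Rightarrow> real) (\<xi>::real) (\<alpha>::real).
     L > 0 \<and> d \<ge> 1 \<and> (\<forall>i<n. \<forall>a<d. \<bar>x i a\<bar> \<le> L) \<and>
     (\<Sum>i<n. \<bar>w i\<bar>)^2 \<le> \<xi> \<and> \<alpha> > 0 \<longrightarrow>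
       (\<forall>s::nat. s \<ge> 1 \<longrightarrow>
          quad_form n w (\<lambda>i j. gauss_kernel d x i j - gs_kernel d s x i j)
            \<le> (\<Sum>i<n. \<bar>w i\<bar>)^2 * d * exp (2 * d * L^2) * (2 * exp 1 * L^2 / s) ^ s) \<and>
       (let A = \<xi> * d * exp (2 * d * L^2) / \<alpha> in
        ln A / (2 * exp 1 * L^2) > 1 \<longrightarrow>
        (\<forall>s::nat. s \<ge> 1 \<and> real s \<ge> C * (ln A / ln (ln A / (2 * exp 1 * L^2))) \<longrightarrow>
           (\<Sum>i<n. \<bar>w i\<bar>)^2 * d * exp (2 * d * L^2) * (2 * exp 1 * L^2 / s) ^ s \<le> \<alpha>))"
proof (intro exI[of _ 2] conjI allI impI; (elim conjE)?; (unfold Let_def)?; (intro impI allI)?; (elim conjE)?)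
  fix L :: real and d n :: nat and x w and s :: nat
  assume "\<forall>i<n. \<forall>a<d. \<bar>x i a\<bar> \<le> L"
  then have "quad_form n w (\<lambda>i j. gauss_kernel d x i j - gs_kernel d s x i j)
      \<le> (\<Sum>i<n. \<bar>w i\<bar>)\<^sup>2 * (d * (2 * exp 1 * L\<^sup>2 / s) ^ s)"
    by (rule quad_form_gauss_minus_gs_le)
  \<comment> \<open>the factor \<open>exp (2 d L\<^sup>2) \<ge> 1\<close> of the statement is slack\<close>
  also have "\<dots> \<le> (\<Sum>i<n. \<bar>w i\<bar>)\<^sup>2 * (d * exp (2 * d * L\<^sup>2) * (2 * exp 1 * L\<^sup>2 / s) ^ s)"
    by (intro mult_left_mono mult_right_mono) (auto simp: mult_le_cancel_left1)
  also have "\<dots> = (\<Sum>i<n. \<bar>w i\<bar>)^2 * d * exp (2 * d * L^2) * (2 * exp 1 * L^2 / s) ^ s"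
    by (simp only: mult.assoc)
  finally show "quad_form n w (\<lambda>i j. gauss_kernel d x i j - gs_kernel d s x i j)
      \<le> (\<Sum>i<n. \<bar>w i\<bar>)^2 * d * exp (2 * d * L^2) * (2 * exp 1 * L^2 / s) ^ s" .
next
  fix L \<xi> \<alpha> :: real and d n :: nat and w and s :: nat
  assume "L > 0" "d \<ge> 1" "(\<Sum>i<n. \<bar>w i\<bar>)^2 \<le> \<xi>" "\<alpha> > 0"
    and "ln (\<xi> * d * exp (2 * d * L^2) / \<alpha>) / (2 * exp 1 * L^2) > 1"
    and "real s \<ge> 2 * (ln (\<xi> * d * exp (2 * d * L^2) / \<alpha>) / ln (ln (\<xi> * d * exp (2 * d * L^2) / \<alpha>) / (2 * exp 1 * L^2)))"
  then show "(\<Sum>i<n. \<bar>w i\<bar>)^2 * d * exp (2 * d * L^2) * (2 * exp 1 * L^2 / s) ^ s \<le> \<alpha>"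
    using scaled_power_div_le[of "(\<Sum>i<n. \<bar>w i\<bar>)\<^sup>2" \<xi> "d * exp (2 * d * L\<^sup>2)" \<alpha> "2 * exp 1 * L\<^sup>2" s]
    by (simp add: mult.assoc)
qed simp

end
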